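(* Let $\theta\in[0,\pi[$, let $A$ be a non-empty line segment of length $l(A)$, let $(h(n))_n$ be a sequence of positive reals, and let $f$ be a lower semi-continuous function from $[\theta-\pi/2,\theta+\pi/2]$ to $\mathbb{R}^+\cup\{+\infty\}$. Let $\mathcal{D}_n=[\theta-\arctan(2h(n)/(nl(A))),\theta+\arctan(2h(n)/(nl(A)))]$ and $\underline{\mathcal{D}}=\bigcup_{N\ge1}\bigcap_{n\ge N}\mathcal{D}_n$. Then $$\limsup_{n\to\infty}\inf_{\widetilde\theta\in\mathcal{D}_n}f(\widetilde\theta)\geq\inf_{\widetilde\theta\in \mathrm{cl}(\underline{\mathcal{D}})}f(\widetilde\theta),$$ where $\mathrm{cl}(\underline{\mathcal{D}})$ is the closure of $\underline{\mathcal{D}}$. *)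

theory Defs
  imports "HOL-Analysis.Analysis" "HOL-Library.Extended_Nonnegative_Real"
begin

definition lower_semicontinuous_on :: "'a::topological_space set \<Rightarrow> ('a \<Rightarrow> 'b::complete_linorder) \<Rightarrow> bool" where
  "lower_semicontinuous_on S f \<longleftrightarrow> (\<forall>x\<in>S. f x \<le> Liminf (at x within S) f)"

definition Dn :: "real \<Rightarrow> real \<Rightarrow> (nat \<Rightarrow> real) \<Rightarrow> nat \<Rightarrow> real set" where
  "Dn \<theta> l h n = {\<theta> - arctan (2 * h n / (real n * l)) .. \<theta> + arctan (2 * h n / (real n * l))}"

definition Dlow :: "real \<Rightarrow> real \<Rightarrow> (nat \<Rightarrow> real) \<Rightarrow> real set" where
  "Dlow \<theta> l h = (\<Union>N\<in>{1..}. \<Inter>n\<in>{N..}. Dn \<theta> l h n)"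

end

theory Submission
  imports Defs
begin

text \<open>
  Fix \<open>c\<close> below the right-hand side. By lower semicontinuity the sublevel set
  \<open>K = {f \<le> c}\<close> is compact, and it misses the closure of the lower limit set. If \<open>K\<close> is
  nonempty, take a point \<open>t\<^sub>0 \<in> K\<close> nearest to \<open>\<theta>\<close>; as \<open>t\<^sub>0\<close> is not in the lower limit,
  infinitely many of the centred intervals \<open>D\<^sub>n\<close> have radius below \<open>\<bar>t\<^sub>0 - \<theta>\<bar>\<close>, hence miss \<open>K\<close>,
  so \<open>f \<ge> c\<close> on them. Therefore the limsup is at least \<open>c\<close>.
\<close>

lemma closed_sublevel_lower_semicontinuous_on:
  fixes f :: "'a::topological_space \<Rightarrow> 'b::complete_linorder"
  assumes lsc: "lower_semicontinuous_on I f" and "closed I"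
  shows "closed {t\<in>I. f t \<le> c}"
  unfolding closed_limpt
proof (intro allI impI)
  fix x assume lim: "x islimpt {t\<in>I. f t \<le> c}"
  then have "x islimpt I"
    by (rule islimpt_subset) auto
  with \<open>closed I\<close> have "x \<in> I"
    by (simp add: closed_limpt)
  show "x \<in> {t\<in>I. f t \<le> c}"
  proof (rule ccontr)
    assume "x \<notin> {t\<in>I. f t \<le> c}"
    with \<open>x \<in> I\<close> have "c < f x" by auto
    moreover have "f x \<le> Liminf (at x within I) f"
      using lsc \<open>x \<in> I\<close> unfolding lower_semicontinuous_on_def by blast
    ultimately have "\<forall>\<^sub>F y in at x within I. c < f y"
      using le_Liminf_iff by blast
    then obtain U where "open U" "x \<in> U" and U: "\<And>y. y \<in> U \<Longrightarrow> y \<noteq> x \<Longrightarrow> y \<in> I \<Longrightarrow> c < f y"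
      unfolding eventually_at_topological by blast
    with lim obtain y where "y \<in> I" "f y \<le> c" "y \<in> U" "y \<noteq> x"
      unfolding islimpt_def by blast
    with U show False by fastforce
  qed
qed

lemma le_Limsup_frequently:
  fixes g :: "_ \<Rightarrow> 'b::complete_linorder"
  assumes "\<exists>\<^sub>F x in F. c \<le> g x"
  shows "c \<le> Limsup F g"
proof (rule ccontr)
  assume "\<not> c \<le> Limsup F g"
  then have "\<forall>\<^sub>F x in F. g x < c"
    by (intro Limsup_lessD) (simp add: not_le)
  with assms show False
    by (simp add: frequently_def eventually_mono not_le)
qed

lemma frequently_le_INF_cball:
  fixes f :: "'a::metric_space \<Rightarrow> 'b::complete_linorder" and r :: "nat \<Rightarrow> real"
  assumes "compact I" and lsc: "lower_semicontinuous_on I f"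
    and cball_sub: "\<And>n. cball \<theta> (r n) \<subseteq> I"
    and escape: "\<And>t. t \<in> I \<Longrightarrow> f t \<le> c \<Longrightarrow> \<exists>\<^sub>F n in sequentially. t \<notin> cball \<theta> (r n)"
  shows "\<exists>\<^sub>F n in sequentially. c \<le> (INF t\<in>cball \<theta> (r n). f t)"
proof -
  define K where "K = {t\<in>I. f t \<le> c}"
  have "closed K"
    unfolding K_def
    using closed_sublevel_lower_semicontinuous_on[OF lsc compact_imp_closed[OF \<open>compact I\<close>]] .
  moreover have "K = I \<inter> K"
    unfolding K_def by blast
  ultimately have "compact K"
    using compact_Int_closed[OF \<open>compact I\<close>] by metis
  have outside_K: "c \<le> f t" if "t \<in> cball \<theta> (r n)" "t \<notin> K" for t n
  proof -
    have "t \<in> I"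
      using that(1) cball_sub by blast
    with that(2) show ?thesis
      unfolding K_def by auto
  qed
  show ?thesis
  proof (cases "K = {}")
    case True
    then have "c \<le> (INF t\<in>cball \<theta> (r n). f t)" for n
      using outside_K by (blast intro: INF_greatest)
    then show ?thesis
      by (simp add: eventually_frequently)
  next
    case False
    have "continuous_on K (dist \<theta>)"
      by (intro continuous_intros)
    then obtain t\<^sub>0 where "t\<^sub>0 \<in> K" and nearest: "\<And>t. t \<in> K \<Longrightarrow> dist \<theta> t\<^sub>0 \<le> dist \<theta> t"
      using continuous_attains_inf[OF \<open>compact K\<close> False] by blast
    have "\<exists>\<^sub>F n in sequentially. r n < dist \<theta> t\<^sub>0"
      using escape[of t\<^sub>0] \<open>t\<^sub>0 \<in> K\<close> unfolding K_def by (simp add: not_le)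
    then show ?thesis
    proof (rule frequently_elim1)
      fix n assume "r n < dist \<theta> t\<^sub>0"
      have "t \<notin> K" if "t \<in> cball \<theta> (r n)" for t
      proof
        assume "t \<in> K"
        with nearest have "dist \<theta> t\<^sub>0 \<le> dist \<theta> t" .
        with that \<open>r n < dist \<theta> t\<^sub>0\<close> show False
          by simp
      qed
      then show "c \<le> (INF t\<in>cball \<theta> (r n). f t)"
        using outside_K by (blast intro: INF_greatest)
    qed
  qed
qed

theorem limsup_INF_cball_ge_INF_closure_lower_limit:
  fixes f :: "'a::metric_space \<Rightarrow> 'b::{complete_linorder, dense_linorder}" and r :: "nat \<Rightarrow> real"
  assumes "compact I" and "lower_semicontinuous_on I f" and "\<And>n. cball \<theta> (r n) \<subseteq> I"
  shows "limsup (\<lambda>n. INF t\<in>cball \<theta> (r n). f t)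
           \<ge> (INF t\<in>closure {t. \<forall>\<^sub>F n in sequentially. t \<in> cball \<theta> (r n)}. f t)"
proof (rule dense_le)
  fix c
  assume c: "c < (INF t\<in>closure {t. \<forall>\<^sub>F n in sequentially. t \<in> cball \<theta> (r n)}. f t)"
  have escape: "\<exists>\<^sub>F n in sequentially. t \<notin> cball \<theta> (r n)" if "f t \<le> c" for t
  proof -
    have "t \<notin> closure {t. \<forall>\<^sub>F n in sequentially. t \<in> cball \<theta> (r n)}"
    proof
      assume "t \<in> closure {t. \<forall>\<^sub>F n in sequentially. t \<in> cball \<theta> (r n)}"
      then have "(INF t\<in>closure {t. \<forall>\<^sub>F n in sequentially. t \<in> cball \<theta> (r n)}. f t) \<le> c"
        using that by (rule INF_lower2)
      from this c show False
        by (rule leD[THEN notE])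
    qed
    then have "\<not> (\<forall>\<^sub>F n in sequentially. t \<in> cball \<theta> (r n))"
      using closure_subset[of "{t. \<forall>\<^sub>F n in sequentially. t \<in> cball \<theta> (r n)}"] by blast
    then show ?thesis
      by (simp add: not_eventually)
  qed
  have "\<exists>\<^sub>F n in sequentially. c \<le> (INF t\<in>cball \<theta> (r n). f t)"
    using assms escape by (rule frequently_le_INF_cball)
  then show "c \<le> limsup (\<lambda>n. INF t\<in>cball \<theta> (r n). f t)"
    by (rule le_Limsup_frequently)
qed

lemma Dn_eq_cball: "Dn \<theta> l h n = cball \<theta> (arctan (2 * h n / (real n * l)))"
  by (simp add: Dn_def cball_eq_atLeastAtMost)

lemma Dlow_eq_lower_limit: "Dlow \<theta> l h = {t. \<forall>\<^sub>F n in sequentially. t \<in> Dn \<theta> l h n}"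
  unfolding Dlow_def eventually_sequentially
  by (auto simp: Bex_def) (metis atLeast_iff max.cobounded1 max.cobounded2 order.trans)

theorem lemma4:
  fixes \<theta> :: real and a b :: "real ^ 2" and h :: "nat \<Rightarrow> real" and f :: "real \<Rightarrow> ennreal"
  assumes "0 \<le> \<theta>" "\<theta> < pi"
    and "a \<noteq> b"
    and "\<And>n. h n > 0"
    and lsc: "lower_semicontinuous_on {\<theta> - pi/2 .. \<theta> + pi/2} f"
  shows "limsup (\<lambda>n. INF t\<in>Dn \<theta> (dist a b) h n. f t)
           \<ge> (INF t\<in>closure (Dlow \<theta> (dist a b) h). f t)"
proof -
  have "cball \<theta> (arctan x) \<subseteq> {\<theta> - pi/2 .. \<theta> + pi/2}" for x
    using arctan_ubound[of x] by (auto simp: cball_eq_atLeastAtMost)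
  from limsup_INF_cball_ge_INF_closure_lower_limit[OF compact_Icc lsc this]
  show ?thesis
    by (simp add: Dlow_eq_lower_limit Dn_eq_cball)
qed

end
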